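(* Let $\vec r\in\mathbb Z^n$. For every $\sigma\in H_{\vec r}$ and $\tau,\rho\in S_n$, $$\vartheta_{\vec r}(\sigma\tau,\rho)=\vartheta_{\vec r}(\sigma,\tau\rho)\,\vartheta_{\vec r}(\tau,\rho).$$
   Context: $n\ge2$, $\theta\in M_n(\mathbb R)$ skew-symmetric, $\omega_{ij}=e^{2\pi i\theta_{ij}}$. $S_n$ acts on $\mathbb Z^n$ by $\sigma\vec r=(r_{\sigma^{-1}(1)},\dots,r_{\sigma^{-1}(n)})$; $H_{\vec r}=\{\sigma\in S_n:\sigma\vec r=\vec r\}$. For $\sigma,\tau\in S_n$: $\vartheta_{\vec r}(\sigma,\tau)=\prod_{i<j,\ \sigma(i)>\sigma(j)}(\omega_{\tau^{-1}(j),\tau^{-1}(i)})^{r_{\sigma(i)}r_{\sigma(j)}}$. *)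

theory Defs
  imports "HOL-Analysis.Analysis" "HOL-Combinatorics.Permutations"
begin

text \<open>Vectors in Z^n are functions nat => int (only values on {1..n} matter);
  theta is a real matrix given as a function nat => nat => real.\<close>

definition omega :: "(nat \<Rightarrow> nat \<Rightarrow> real) \<Rightarrow> nat \<Rightarrow> nat \<Rightarrow> complex" where
  "omega \<theta> i j = exp (2 * of_real pi * \<i> * of_real (\<theta> i j))"

definition perm_act :: "(nat \<Rightarrow> nat) \<Rightarrow> (nat \<Rightarrow> int) \<Rightarrow> (nat \<Rightarrow> int)" where
  "perm_act \<sigma> r = (\<lambda>k. r (inv \<sigma> k))"

definition stabilizer :: "nat \<Rightarrow> (nat \<Rightarrow> int) \<Rightarrow> (nat \<Rightarrow> nat) set" where
  "stabilizer n r = {\<sigma>. \<sigma> permutes {1..n} \<and> (\<forall>k\<in>{1..n}. perm_act \<sigma> r k = r k)}"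

definition vartheta ::
  "nat \<Rightarrow> (nat \<Rightarrow> nat \<Rightarrow> real) \<Rightarrow> (nat \<Rightarrow> int) \<Rightarrow> (nat \<Rightarrow> nat) \<Rightarrow> (nat \<Rightarrow> nat) \<Rightarrow> complex" where
  "vartheta n \<theta> r \<sigma> \<tau> =
     (\<Prod>(i, j)\<in>{(i, j). i \<in> {1..n} \<and> j \<in> {1..n} \<and> i < j \<and> \<sigma> i > \<sigma> j}.
        (omega \<theta> (inv \<tau> j) (inv \<tau> i)) powi (r (\<sigma> i) * r (\<sigma> j)))"

end

theory Submission
  imports Defs
begin

text \<open>\<open>\<vartheta>\<^sub>r(\<sigma>, \<tau>)\<close> is the product, over the inversions of \<open>\<sigma>\<close>, of a weight on ordered
  pairs which is antisymmetric (\<open>w a b * w b a = 1\<close>) because \<open>\<theta>\<close> is skew; for \<open>\<sigma> \<in> H\<^sub>r\<close>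
  the weight does not see \<open>\<sigma>\<close>. Inversion products with an antisymmetric weight form a cocycle:
  reindex the pairs \<open>a < b\<close> by their sorted images under \<open>\<tau>\<close>. A pair inverted by \<open>\<sigma> \<circ> \<tau>\<close>
  is inverted by exactly one of \<open>\<tau>\<close> and (on its image) \<open>\<sigma>\<close>; a pair not inverted by
  \<open>\<sigma> \<circ> \<tau>\<close> is inverted by both or by neither, and in the first case the two contributions
  are \<open>w a b\<close> and \<open>w b a\<close>, which cancel.\<close>

definition increasing_pairs :: "'a::linorder set \<Rightarrow> ('a \<times> 'a) set" where
  "increasing_pairs A = {(i, j). i \<in> A \<and> j \<in> A \<and> i < j}"

definition inversion_prod ::
  "'a::linorder set \<Rightarrow> ('a \<Rightarrow> 'a) \<Rightarrow> ('a \<Rightarrow> 'a \<Rightarrow> 'b::comm_monoid_mult) \<Rightarrow> 'b" where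
  "inversion_prod A \<sigma> f = (\<Prod>(i, j)\<in>{(i, j). i \<in> A \<and> j \<in> A \<and> i < j \<and> \<sigma> j < \<sigma> i}. f i j)"

definition sorted_image_pair :: "('a \<Rightarrow> 'a::linorder) \<Rightarrow> 'a \<times> 'a \<Rightarrow> 'a \<times> 'a" where
  "sorted_image_pair \<tau> = (\<lambda>(a, b). if \<tau> a < \<tau> b then (\<tau> a, \<tau> b) else (\<tau> b, \<tau> a))"

lemma finite_increasing_pairs: "finite A \<Longrightarrow> finite (increasing_pairs A)"
  by (rule finite_subset[of _ "A \<times> A"]) (auto simp: increasing_pairs_def)

lemma inversion_prod_increasing_pairs:
  assumes "finite A"
  shows "inversion_prod A \<sigma> f =
    (\<Prod>(i, j)\<in>increasing_pairs A. if \<sigma> j < \<sigma> i then f i j else 1)"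
proof -
  have "{(i, j). i \<in> A \<and> j \<in> A \<and> i < j \<and> \<sigma> j < \<sigma> i} =
      {x \<in> increasing_pairs A. \<sigma> (snd x) < \<sigma> (fst x)}"
    by (auto simp: increasing_pairs_def)
  then show ?thesis
    unfolding inversion_prod_def
    by (simp add: prod.inter_filter[OF finite_increasing_pairs[OF assms]] case_prod_beta if_distrib)
qed

lemma inversion_prod_cong:
  "(\<And>a b. a \<in> A \<Longrightarrow> b \<in> A \<Longrightarrow> f a b = g a b) \<Longrightarrow> inversion_prod A \<sigma> f = inversion_prod A \<sigma> g"
  unfolding inversion_prod_def by (rule prod.cong) auto

lemma sorted_image_pair_in_increasing_pairs:
  assumes "\<tau> permutes A" "x \<in> increasing_pairs A"
  shows "sorted_image_pair \<tau> x \<in> increasing_pairs A"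
proof -
  obtain a b where x: "x = (a, b)" "a \<in> A" "b \<in> A" "a \<noteq> b"
    using assms(2) by (auto simp: increasing_pairs_def)
  then have "\<tau> a \<in> A" "\<tau> b \<in> A" "\<tau> a \<noteq> \<tau> b"
    using permutes_in_image[OF assms(1)] permutes_inj[OF assms(1)] by (auto dest: injD)
  then show ?thesis
    by (auto simp: x sorted_image_pair_def increasing_pairs_def)
qed

lemma sorted_image_pair_inv:
  assumes "\<tau> permutes A" "x \<in> increasing_pairs A"
  shows "sorted_image_pair (inv \<tau>) (sorted_image_pair \<tau> x) = x"
proof -
  obtain a b where "x = (a, b)" "a < b"
    using assms(2) by (auto simp: increasing_pairs_def)
  then show ?thesis
    by (auto simp: sorted_image_pair_def permutes_inverses(2)[OF assms(1)])
qed

lemma bij_betw_sorted_image_pair: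
  assumes "\<tau> permutes A"
  shows "bij_betw (sorted_image_pair \<tau>) (increasing_pairs A) (increasing_pairs A)"
proof (rule bij_betw_byWitness[where f' = "sorted_image_pair (inv \<tau>)"])
  have inv_inv: "inv (inv \<tau>) = \<tau>"
    by (rule inv_inv_eq[OF permutes_bij[OF assms]])
  show "\<forall>x\<in>increasing_pairs A. sorted_image_pair (inv \<tau>) (sorted_image_pair \<tau> x) = x"
    using sorted_image_pair_inv[OF assms] by blast
  show "\<forall>x\<in>increasing_pairs A. sorted_image_pair \<tau> (sorted_image_pair (inv \<tau>) x) = x"
    using sorted_image_pair_inv[OF permutes_inv[OF assms]] by (simp add: inv_inv)
  show "sorted_image_pair \<tau> ` increasing_pairs A \<subseteq> increasing_pairs A"
    using sorted_image_pair_in_increasing_pairs[OF assms] by blast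
  show "sorted_image_pair (inv \<tau>) ` increasing_pairs A \<subseteq> increasing_pairs A"
    using sorted_image_pair_in_increasing_pairs[OF permutes_inv[OF assms]] by blast
qed

lemma inversion_prod_comp:
  assumes "finite A" "inj_on \<sigma> A" "\<tau> permutes A"
    and swap: "\<And>a b. a \<in> A \<Longrightarrow> b \<in> A \<Longrightarrow> f a b * f b a = 1"
  shows "inversion_prod A (\<sigma> \<circ> \<tau>) f =
    inversion_prod A \<sigma> (\<lambda>a b. f (inv \<tau> a) (inv \<tau> b)) * inversion_prod A \<tau> f"
proof -
  define g where "g = (\<lambda>(a, b). if \<sigma> b < \<sigma> a then f (inv \<tau> a) (inv \<tau> b) else 1)"
  have pair_factor: "(if \<sigma> (\<tau> b) < \<sigma> (\<tau> a) then f a b else 1) =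
      g (sorted_image_pair \<tau> (a, b)) * (if \<tau> b < \<tau> a then f a b else 1)"
    if "(a, b) \<in> increasing_pairs A" for a b
  proof -
    from that have "a \<in> A" "b \<in> A" "a \<noteq> b"
      by (auto simp: increasing_pairs_def)
    then have "\<tau> a \<in> A" "\<tau> b \<in> A" "\<tau> a \<noteq> \<tau> b"
      using permutes_in_image[OF assms(3)] permutes_inj[OF assms(3)] by (auto dest: injD)
    then have "\<sigma> (\<tau> a) \<noteq> \<sigma> (\<tau> b)"
      using assms(2) by (auto dest: inj_onD)
    with \<open>\<tau> a \<noteq> \<tau> b\<close> swap[OF \<open>a \<in> A\<close> \<open>b \<in> A\<close>] show ?thesis
      by (auto simp: g_def sorted_image_pair_def permutes_inverses(2)[OF assms(3)]
          mult.commute)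
  qed
  have "inversion_prod A (\<sigma> \<circ> \<tau>) f = (\<Prod>(a, b)\<in>increasing_pairs A.
      g (sorted_image_pair \<tau> (a, b)) * (if \<tau> b < \<tau> a then f a b else 1))"
    unfolding inversion_prod_increasing_pairs[OF assms(1)]
    by (rule prod.cong) (auto simp: pair_factor)
  also have "\<dots> = (\<Prod>x\<in>increasing_pairs A. g (sorted_image_pair \<tau> x)) * inversion_prod A \<tau> f"
    by (simp add: inversion_prod_increasing_pairs[OF assms(1)] prod.distrib case_prod_beta)
  also have "(\<Prod>x\<in>increasing_pairs A. g (sorted_image_pair \<tau> x)) = prod g (increasing_pairs A)"
    by (rule prod.reindex_bij_betw[OF bij_betw_sorted_image_pair[OF assms(3)]])
  also have "\<dots> = inversion_prod A \<sigma> (\<lambda>a b. f (inv \<tau> a) (inv \<tau> b))"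
    unfolding inversion_prod_increasing_pairs[OF assms(1)] g_def ..
  finally show ?thesis .
qed

definition vartheta_weight ::
  "(nat \<Rightarrow> nat \<Rightarrow> real) \<Rightarrow> (nat \<Rightarrow> nat) \<Rightarrow> (nat \<Rightarrow> int) \<Rightarrow> nat \<Rightarrow> nat \<Rightarrow> complex" where
  "vartheta_weight \<theta> \<tau> s i j = omega \<theta> (inv \<tau> j) (inv \<tau> i) powi (s i * s j)"

lemma vartheta_eq_inversion_prod:
  "vartheta n \<theta> r \<sigma> \<tau> = inversion_prod {1..n} \<sigma> (vartheta_weight \<theta> \<tau> (r \<circ> \<sigma>))"
  unfolding vartheta_def inversion_prod_def vartheta_weight_def by simp

lemma omega_mult_swap:
  assumes "\<theta> a b = - \<theta> b a"
  shows "omega \<theta> a b * omega \<theta> b a = 1"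
proof -
  have "omega \<theta> a b * omega \<theta> b a = exp (2 * of_real pi * \<i> * of_real (\<theta> a b + \<theta> b a))"
    unfolding omega_def by (simp add: exp_add[symmetric] algebra_simps)
  moreover have "\<theta> a b + \<theta> b a = 0"
    using assms by simp
  ultimately show ?thesis
    by simp
qed

lemma vartheta_weight_mult_swap:
  assumes "\<forall>i\<in>{1..n}. \<forall>j\<in>{1..n}. \<theta> i j = - \<theta> j i" "\<tau> permutes {1..n}"
    and "a \<in> {1..n}" "b \<in> {1..n}"
  shows "vartheta_weight \<theta> \<tau> s a b * vartheta_weight \<theta> \<tau> s b a = 1"
proof -
  have "inv \<tau> b \<in> {1..n}" "inv \<tau> a \<in> {1..n}"
    by (simp_all only: permutes_in_image[OF permutes_inv[OF assms(2)]] assms(3,4))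
  then have "omega \<theta> (inv \<tau> b) (inv \<tau> a) * omega \<theta> (inv \<tau> a) (inv \<tau> b) = 1"
    by (rule omega_mult_swap[OF assms(1)[rule_format]])
  then show ?thesis
    unfolding vartheta_weight_def mult.commute[of "s b"] power_int_mult_distrib[symmetric]
    by (simp only: power_int_1_left)
qed

lemma stabilizer_permutes: "\<sigma> \<in> stabilizer n r \<Longrightarrow> \<sigma> permutes {1..n}"
  by (simp add: stabilizer_def)

lemma stabilizer_apply:
  assumes "\<sigma> \<in> stabilizer n r" "k \<in> {1..n}"
  shows "r (\<sigma> k) = r k"
proof -
  have perm: "\<sigma> permutes {1..n}" and fixed: "\<forall>k\<in>{1..n}. r (inv \<sigma> k) = r k"
    using assms(1) by (simp_all add: stabilizer_def perm_act_def)
  have "\<sigma> k \<in> {1..n}"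
    using assms(2) by (simp only: permutes_in_image[OF perm])
  with fixed have "r (inv \<sigma> (\<sigma> k)) = r (\<sigma> k)"
    by (rule bspec)
  then show ?thesis
    by (simp only: permutes_inverses(2)[OF perm])
qed

theorem lemma4p10:
  fixes n :: nat and \<theta> :: "nat \<Rightarrow> nat \<Rightarrow> real" and r :: "nat \<Rightarrow> int"
    and \<sigma> \<tau> \<rho> :: "nat \<Rightarrow> nat"
  assumes "n \<ge> 2"
    and "\<forall>i\<in>{1..n}. \<forall>j\<in>{1..n}. \<theta> i j = - \<theta> j i"
    and "\<sigma> \<in> stabilizer n r"
    and "\<tau> permutes {1..n}" and "\<rho> permutes {1..n}"
  shows "vartheta n \<theta> r (\<sigma> \<circ> \<tau>) \<rho> = vartheta n \<theta> r \<sigma> (\<tau> \<circ> \<rho>) * vartheta n \<theta> r \<tau> \<rho>"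
proof -
  let ?w = "vartheta_weight \<theta> \<rho> (r \<circ> \<tau>)"
  have "vartheta n \<theta> r (\<sigma> \<circ> \<tau>) \<rho> = inversion_prod {1..n} (\<sigma> \<circ> \<tau>) ?w"
    unfolding vartheta_eq_inversion_prod vartheta_weight_def
    by (rule inversion_prod_cong)
      (simp only: o_apply stabilizer_apply[OF assms(3)] permutes_in_image[OF assms(4)])
  also have "\<dots> = inversion_prod {1..n} \<sigma> (\<lambda>a b. ?w (inv \<tau> a) (inv \<tau> b)) * inversion_prod {1..n} \<tau> ?w"
    by (rule inversion_prod_comp[OF finite_atLeastAtMost permutes_inj_on[OF stabilizer_permutes[OF assms(3)]]
          assms(4) vartheta_weight_mult_swap[OF assms(2,5)]])
  also have "inversion_prod {1..n} \<sigma> (\<lambda>a b. ?w (inv \<tau> a) (inv \<tau> b)) = vartheta n \<theta> r \<sigma> (\<tau> \<circ> \<rho>)"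
    unfolding vartheta_eq_inversion_prod vartheta_weight_def
      o_inv_distrib[OF permutes_bij[OF assms(4)] permutes_bij[OF assms(5)]]
    by (rule inversion_prod_cong)
      (simp only: o_apply permutes_inverses(1)[OF assms(4)] stabilizer_apply[OF assms(3)])
  finally show ?thesis
    unfolding vartheta_eq_inversion_prod .
qed

end
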